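(* Let $a_1\ge a_2\ge\dots\ge a_n\ge0$, let $\delta\in(2/n,1]$ be such that $1/\delta$ is an integer, and let $\delta_1,\dots,\delta_n$ be independent random variables with $\mathbb P(\delta_j=1)=\delta$, $\mathbb P(\delta_j=0)=1-\delta$. Put $n(\delta)=e+\sum_{j=1}^n\delta_j$. Then $$\frac{\delta}{4e}\sqrt{\log(\delta n)}\sum_{j=1}^{1/\delta}a_j\ \le\ \mathbb E\Bigl(\sqrt{\log n(\delta)}\cdot\max_{1\le j\le n}\delta_ja_j\Bigr)\ \le\ 4\delta\sqrt{\log(\delta n)}\sum_{j=1}^{1/\delta}a_j.$$
   Context: $\log$ is the natural logarithm and $e$ is Euler's number. *)

theory Defs
  imports "HOL-Probability.Probability"
begin

end

theory Submission
  imports Defs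
begin

(* The X_j agree almost surely with the indicators Y_j of {X_j = 1}, an independent
   Bernoulli(delta) family; let S be the sum of the Y_j, so E S = delta n.

   Upper bound: s |-> sqrt (log (e + s)) is concave, hence below its tangent at s = delta n,
   and max_j Y_j a_j <= sum_{j<=k} Y_j a_j + a_{k+1} with a_{k+1} <= delta sum_{j<=k} a_j.
   The expectation of the product of these two affine bounds only involves the
   covariances of the Y_j.

   Lower bound: the maximum is at least a_J, where J <= k is the first index with Y_J = 1,
   and the logarithmic factor is at least its value at the tail sum of the Y_j, j > k.
   These two factors are independent.  As (1 - delta)^(k-1) >= 1/e, the first has mean at
   least (delta/e) sum_{j<=k} a_j; the tail sum has variance at most its mean, which is
   at least delta n / 2, so a second-moment argument bounds the mean of the second
   factor by sqrt (log (delta n)) / 4 from below. *)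

lemma one_le_ln_exp_add: "0 \<le> s \<Longrightarrow> 1 \<le> ln (exp 1 + s :: real)"
  by (subst ln_ge_iff) (auto intro: add_pos_nonneg)

lemma one_le_sqrt_ln_exp_add: "0 \<le> s \<Longrightarrow> 1 \<le> sqrt (ln (exp 1 + s :: real))"
  using one_le_ln_exp_add by simp

lemma sqrt_ln_exp_add_mono:
  "0 \<le> s \<Longrightarrow> s \<le> t \<Longrightarrow> sqrt (ln (exp 1 + s)) \<le> sqrt (ln (exp 1 + t :: real))"
  by (simp add: add_pos_nonneg)

lemma sqrt_ln_exp_add_le_tangent:
  fixes s x :: real
  assumes "0 \<le> s" "0 \<le> x"
  shows "sqrt (ln (exp 1 + s))
           \<le> sqrt (ln (exp 1 + x)) + (s - x) / (2 * sqrt (ln (exp 1 + x)) * (exp 1 + x))"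
proof -
  define t where "t = ln (exp 1 + x)"
  have t: "1 \<le> t" unfolding t_def using assms(2) by (rule one_le_ln_exp_add)
  have pos: "0 < exp 1 + x" "0 < exp 1 + s" using assms by (simp_all add: add_pos_nonneg)
  have "ln (exp 1 + s) - t = ln ((exp 1 + s) / (exp 1 + x))"
    using pos by (simp add: t_def ln_div)
  also have "\<dots> \<le> (exp 1 + s) / (exp 1 + x) - 1"
    using pos by (intro ln_le_minus_one) simp
  also have "\<dots> = (s - x) / (exp 1 + x)"
    using pos by (simp add: field_simps)
  finally have ln_le: "ln (exp 1 + s) \<le> t + (s - x) / (exp 1 + x)" by simp
  have "sqrt (ln (exp 1 + s)) = sqrt (ln (exp 1 + s) * t) / sqrt t"
    using t by (simp add: real_sqrt_mult)
  also have "\<dots> \<le> (ln (exp 1 + s) + t) / 2 / sqrt t"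
    using assms t one_le_ln_exp_add[of s]
    by (intro divide_right_mono arith_geo_mean_sqrt) auto
  also have "\<dots> \<le> (2 * t + (s - x) / (exp 1 + x)) / 2 / sqrt t"
    using ln_le t by (intro divide_right_mono) auto
  also have "\<dots> = sqrt t + (s - x) / (2 * sqrt t * (exp 1 + x))"
  proof -
    have "(2 * r\<^sup>2 + d) / 2 / r = r + d / (2 * r)" if "0 < r" for r d :: real
      using that by (simp add: field_simps power2_eq_square)
    from this[of "sqrt t" "(s - x) / (exp 1 + x)"] show ?thesis
      using t by (simp add: mult.commute)
  qed
  finally show ?thesis unfolding t_def .
qed

lemma ln_2_ge_half: "1 / 2 \<le> ln (2 :: real)"
  using ln_le_minus_one[of "1 / 2 :: real"] by (simp add: ln_div)

lemma twice_sqrt_ln_exp_add_plus_slope_le: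
  fixes x :: real
  assumes "2 < x"
  shows "2 * sqrt (ln (exp 1 + x)) + 1 / (2 * sqrt (ln (exp 1 + x)) * (exp 1 + x)) \<le> 4 * sqrt (ln x)"
proof -
  have "exp 1 + x \<le> x ^ 3"
  proof -
    have "2 * 2 \<le> x * x" using assms by (intro mult_mono) auto
    hence "4 * x \<le> x * x * x" using assms by (intro mult_right_mono) auto
    thus ?thesis unfolding power3_eq_cube using assms exp_le by linarith
  qed
  hence "ln (exp 1 + x) \<le> ln (x ^ 3)"
    using assms by (simp add: add_pos_pos)
  also have "\<dots> = 3 * ln x"
    using assms by (simp add: ln_realpow)
  finally have "ln (exp 1 + x) \<le> 3 * ln x" .
  hence "sqrt (ln (exp 1 + x)) \<le> sqrt 3 * sqrt (ln x)"
    by (simp flip: real_sqrt_mult)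
  also have "\<dots> \<le> 7 / 4 * sqrt (ln x)"
    using assms by (intro mult_right_mono real_le_lsqrt) (auto simp: power2_eq_square)
  finally have main: "sqrt (ln (exp 1 + x)) \<le> 7 / 4 * sqrt (ln x)" .
  have "1 / 2 \<le> ln x" using ln_2_ge_half assms by (smt (verit) ln_less_cancel_iff)
  hence "7 / 10 \<le> sqrt (ln x)"
    by (intro real_le_rsqrt) (simp add: power2_eq_square)
  moreover have "1 / (2 * sqrt (ln (exp 1 + x)) * (exp 1 + x)) \<le> 1 / 4"
  proof -
    have "2 * 1 * 2 \<le> 2 * sqrt (ln (exp 1 + x)) * (exp 1 + x)"
      using assms one_le_sqrt_ln_exp_add[of x] exp_ge_zero[of 1]
      by (intro mult_mono) linarith+
    thus ?thesis by (simp add: divide_simps)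
  qed
  ultimately show ?thesis using main by linarith
qed

lemma exp_minus_one_le_power:
  fixes k :: nat
  assumes "1 \<le> k"
  shows "exp (-1) \<le> (1 - 1 / real k) ^ (k - 1)"
proof (cases "k = 1")
  case False
  define m where "m = k - 1"
  have m: "0 < real m" "real k = real m + 1" using assms False by (auto simp: m_def)
  have "(1 + 1 / real m) ^ m \<le> exp 1"
    using m by (intro exp_ge_one_plus_x_over_n_power_n) auto
  moreover have "1 - 1 / real k = real m / real k" "1 + 1 / real m = real k / real m"
    using m by (simp_all add: field_simps)
  hence "(1 - 1 / real k) * (1 + 1 / real m) = 1"
    using m by simp
  hence "(1 - 1 / real k) ^ m * (1 + 1 / real m) ^ m = 1"
    by (simp flip: power_mult_distrib)
  moreover have "0 \<le> (1 - 1 / real k) ^ m"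
    using m by (simp add: field_simps)
  ultimately have "1 \<le> (1 - 1 / real k) ^ m * exp 1"
    by (metis mult_left_mono)
  thus ?thesis by (simp add: m_def exp_minus field_simps)
qed simp

lemma reciprocal_bounds:
  fixes \<delta> :: real
  assumes "\<delta> * real k = 1" "2 < \<delta> * real n"
  shows "0 < \<delta>" "1 \<le> k" "2 * k < n"
proof -
  show "1 \<le> k" using assms(1) by (cases k) auto
  have "0 < \<delta> * real k" using assms(1) by simp
  thus "0 < \<delta>" by (simp add: zero_less_mult_iff)
  have "\<delta> * real (2 * k) = 2" using assms(1) by (simp add: mult.left_commute)
  hence "\<delta> * real (2 * k) < \<delta> * real n" using assms(2) by linarith
  thus "2 * k < n" using \<open>0 < \<delta>\<close> by (simp only: mult_less_cancel_left_pos of_nat_less_iff)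
qed

definition first_success :: "(nat \<Rightarrow> real) \<Rightarrow> nat \<Rightarrow> real" where
  "first_success \<omega> j = \<omega> j * (\<Prod>i\<in>{1..<j}. 1 - \<omega> i)"

lemma first_success_restrict:
  "1 \<le> j \<Longrightarrow> {1..j} \<subseteq> I \<Longrightarrow> first_success (restrict \<omega> I) j = first_success \<omega> j"
  unfolding first_success_def by (auto intro!: prod.cong simp: subset_iff)

lemma sum_first_success: "(\<Sum>j=1..k. first_success \<omega> j) = 1 - (\<Prod>i=1..k. 1 - \<omega> i)"
proof (induction k)
  case (Suc k)
  have "{1..<Suc k} = {1..k}" by auto
  with Suc show ?case by (simp add: first_success_def algebra_simps)
qed simp

lemma first_success_nonneg:
  "(\<And>i. 0 \<le> \<omega> i \<and> \<omega> i \<le> 1) \<Longrightarrow> 0 \<le> first_success \<omega> j"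
  unfolding first_success_def by (simp add: prod_nonneg)

lemma Max_mult_nonneg:
  fixes a :: "nat \<Rightarrow> real"
  assumes "1 \<le> n" "\<And>j. 0 \<le> \<omega> j" "\<And>j. j \<in> {1..n} \<Longrightarrow> 0 \<le> a j"
  shows "0 \<le> Max ((\<lambda>j. \<omega> j * a j) ` {1..n})"
proof -
  have "\<omega> 1 * a 1 \<le> Max ((\<lambda>j. \<omega> j * a j) ` {1..n})"
    using assms(1) by (intro Max_ge) auto
  moreover have "0 \<le> \<omega> 1 * a 1" using assms by simp
  ultimately show ?thesis by linarith
qed

lemma sum_first_success_le_Max:
  fixes a :: "nat \<Rightarrow> real"
  assumes \<omega>: "\<And>i. \<omega> i \<in> {0, 1}" and a: "\<And>j. j \<in> {1..n} \<Longrightarrow> 0 \<le> a j" and "k \<le> n" "1 \<le> n"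
  shows "(\<Sum>j=1..k. a j * first_success \<omega> j) \<le> Max ((\<lambda>j. \<omega> j * a j) ` {1..n})"
proof -
  define m where "m = Max ((\<lambda>j. \<omega> j * a j) ` {1..n})"
  have \<omega>01: "0 \<le> \<omega> i \<and> \<omega> i \<le> 1" for i using \<omega>[of i] by auto
  have "a j * first_success \<omega> j \<le> m * first_success \<omega> j" if "j \<in> {1..k}" for j
  proof -
    have "a j * first_success \<omega> j = (\<omega> j * a j) * first_success \<omega> j"
      using \<omega>[of j] by (auto simp: first_success_def)
    also have "\<dots> \<le> m * first_success \<omega> j"
      unfolding m_def using that assms \<omega>01
      by (intro mult_right_mono Max_ge first_success_nonneg) auto
    finally show ?thesis .
  qed
  hence "(\<Sum>j=1..k. a j * first_success \<omega> j) \<le> m * (\<Sum>j=1..k. first_success \<omega> j)"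
    unfolding sum_distrib_left by (intro sum_mono) auto
  also have "\<dots> \<le> m"
    unfolding sum_first_success using \<omega>01 Max_mult_nonneg[OF \<open>1 \<le> n\<close>, of \<omega> a] a
    by (simp add: m_def mult_left_le prod_nonneg)
  finally show ?thesis unfolding m_def .
qed

lemma Max_mult_le_sum_add:
  fixes a :: "nat \<Rightarrow> real"
  assumes \<omega>: "\<And>j. 0 \<le> \<omega> j \<and> \<omega> j \<le> 1"
    and a: "antimono_on {1..n} a" "\<And>j. j \<in> {1..n} \<Longrightarrow> 0 \<le> a j" and "k < n"
  shows "Max ((\<lambda>j. \<omega> j * a j) ` {1..n}) \<le> (\<Sum>j=1..k. \<omega> j * a j) + a (k + 1)"
proof (rule Max.boundedI)
  show "(\<lambda>j. \<omega> j * a j) ` {1..n} \<noteq> {}" using \<open>k < n\<close> by auto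
  fix t assume "t \<in> (\<lambda>j. \<omega> j * a j) ` {1..n}"
  then obtain j where j: "j \<in> {1..n}" "t = \<omega> j * a j" by auto
  have sum_nonneg: "0 \<le> (\<Sum>j=1..k. \<omega> j * a j)"
    using assms by (intro sum_nonneg) auto
  show "t \<le> (\<Sum>j=1..k. \<omega> j * a j) + a (k + 1)"
  proof (cases "j \<le> k")
    case True
    hence "\<omega> j * a j \<le> (\<Sum>j=1..k. \<omega> j * a j)"
      using j assms by (intro member_le_sum) auto
    thus ?thesis using j a(2)[of "k + 1"] \<open>k < n\<close> by simp
  next
    case False
    have "\<omega> j * a j \<le> a j" using j \<omega> a(2) by (simp add: mult_left_le_one_le)
    also have "a j \<le> a (k + 1)"
      using False j \<open>k < n\<close> by (intro monotone_onD[OF a(1)]) auto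
    finally show ?thesis using j sum_nonneg by simp
  qed
qed simp

lemma antimono_on_atLeastAtMost_Suc:
  fixes a :: "nat \<Rightarrow> 'a :: order"
  assumes "\<And>j. 1 \<le> j \<Longrightarrow> j < n \<Longrightarrow> a (Suc j) \<le> a j"
  shows "antimono_on {1..n} a"
proof (rule monotone_onI)
  fix i j assume "i \<in> {1..n}" "j \<in> {1..n}" "i \<le> j"
  show "a j \<le> a i"
  proof (rule lift_Suc_antimono_le_ivl[where N = "{1..<n}"])
    show "a (Suc m) \<le> a m" if "m \<in> {1..<n}" for m
      using assms that by simp
  qed (use \<open>i \<in> {1..n}\<close> \<open>j \<in> {1..n}\<close> \<open>i \<le> j\<close> in auto)
qed

lemma antimono_on_mult_le_sum:
  fixes a :: "nat \<Rightarrow> real"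
  assumes "antimono_on {1..n} a" "k < n"
  shows "real k * a (k + 1) \<le> (\<Sum>j=1..k. a j)"
  using sum_mono[of "{1..k}" "\<lambda>_. a (k + 1)" a] monotone_onD[OF assms(1)] assms(2) by simp

lemma sqrt_ln_sum_mult_Max_le:
  fixes \<omega> a :: "nat \<Rightarrow> real"
  assumes \<omega>: "\<And>j. 0 \<le> \<omega> j \<and> \<omega> j \<le> 1"
    and a: "antimono_on {1..n} a" "\<And>j. j \<in> {1..n} \<Longrightarrow> 0 \<le> a j" and "k < n" "0 \<le> x"
  defines "g \<equiv> sqrt (ln (exp 1 + x))" and "S \<equiv> \<Sum>j=1..n. \<omega> j"
  shows "sqrt (ln (exp 1 + S)) * Max ((\<lambda>j. \<omega> j * a j) ` {1..n})
           \<le> (g + (S - x) / (2 * g * (exp 1 + x))) * ((\<Sum>j=1..k. \<omega> j * a j) + a (k + 1))"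
proof (rule mult_mono)
  have "0 \<le> S" using \<omega> by (simp add: S_def sum_nonneg)
  thus "sqrt (ln (exp 1 + S)) \<le> g + (S - x) / (2 * g * (exp 1 + x))"
    unfolding g_def using \<open>0 \<le> x\<close> by (rule sqrt_ln_exp_add_le_tangent)
  show "Max ((\<lambda>j. \<omega> j * a j) ` {1..n}) \<le> (\<Sum>j=1..k. \<omega> j * a j) + a (k + 1)"
    using assms by (intro Max_mult_le_sum_add) auto
  show "0 \<le> Max ((\<lambda>j. \<omega> j * a j) ` {1..n})"
    using \<omega> a(2) \<open>k < n\<close> by (intro Max_mult_nonneg) auto
  show "0 \<le> g + (S - x) / (2 * g * (exp 1 + x))"
    using \<open>0 \<le> S\<close> one_le_sqrt_ln_exp_add[OF \<open>0 \<le> S\<close>] sqrt_ln_exp_add_le_tangent[OF \<open>0 \<le> S\<close> \<open>0 \<le> x\<close>]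
    unfolding g_def by linarith
qed

lemma (in prob_space) second_moment_lower_bound:
  fixes S :: "'a \<Rightarrow> real" and h :: "real \<Rightarrow> real"
  defines "\<mu> \<equiv> expectation S"
  assumes "integrable M S" "integrable M (\<lambda>x. (S x - \<mu>)\<^sup>2)" "integrable M (\<lambda>x. h (S x))"
    and "0 < \<mu>" "variance S \<le> \<mu>" "0 \<le> h (\<mu> / 2)"
    and "\<And>x. x \<in> space M \<Longrightarrow> 0 \<le> h (S x)"
    and "\<And>x. x \<in> space M \<Longrightarrow> \<mu> / 2 \<le> S x \<Longrightarrow> h (\<mu> / 2) \<le> h (S x)"
  shows "(1 - 4 / \<mu>) * h (\<mu> / 2) \<le> expectation (\<lambda>x. h (S x))"
proof -
  define c where "c = h (\<mu> / 2)"
  \<comment> \<open>The quadratic below is at most \<open>c\<close>, and negative where \<open>S < \<mu> / 2\<close>.\<close>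
  define q where "q x = c - 4 * c / \<mu>\<^sup>2 * (S x - \<mu>)\<^sup>2" for x
  have "q x \<le> h (S x)" if x: "x \<in> space M" for x
  proof (cases "\<mu> / 2 \<le> S x")
    case True
    have "q x \<le> c" using assms by (simp add: q_def c_def)
    thus ?thesis using assms(9)[OF x True] by (simp add: c_def)
  next
    case False
    hence "\<mu>\<^sup>2 \<le> (2 * (\<mu> - S x))\<^sup>2"
      using \<open>0 < \<mu>\<close> by (intro power_mono) auto
    hence "\<mu>\<^sup>2 \<le> 4 * (S x - \<mu>)\<^sup>2"
      by (simp add: power2_eq_square algebra_simps)
    hence "c * \<mu>\<^sup>2 \<le> c * (4 * (S x - \<mu>)\<^sup>2)"
      using assms(7) by (intro mult_left_mono) (auto simp: c_def)
    hence "q x \<le> 0"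
      using \<open>0 < \<mu>\<close> by (simp add: q_def field_simps)
    thus ?thesis using assms(8)[OF x] by linarith
  qed
  hence q_le: "expectation q \<le> expectation (\<lambda>x. h (S x))"
    unfolding q_def using assms(3,4) by (intro integral_mono) auto
  have "(1 - 4 / \<mu>) * c = c - 4 * c / \<mu>\<^sup>2 * \<mu>"
    using \<open>0 < \<mu>\<close> by (simp add: field_simps power2_eq_square)
  also have "\<dots> \<le> c - 4 * c / \<mu>\<^sup>2 * variance S"
    using assms(6,7) by (intro diff_left_mono mult_left_mono) (auto simp: c_def)
  also have "\<dots> = expectation q"
    unfolding q_def using assms(3)
    by (subst Bochner_Integration.integral_diff) (auto simp: prob_space \<mu>_def)
  finally show ?thesis using q_le by (simp add: c_def)
qed

locale bernoulli_family = prob_space +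
  fixes Y :: "nat \<Rightarrow> 'a \<Rightarrow> real" and n :: nat and \<delta> :: real
  assumes Y_01: "Y j x \<in> {0, 1}"
    and measurable_Y [measurable]: "Y j \<in> borel_measurable M"
    and indep_Y: "indep_vars (\<lambda>_. borel) Y {1..n}"
    and expectation_Y: "j \<in> {1..n} \<Longrightarrow> expectation (Y j) = \<delta>"
begin

lemma Y_nonneg [simp]: "0 \<le> Y j x"
  using Y_01[of j x] by auto

lemma Y_le_1 [simp]: "Y j x \<le> 1"
  using Y_01[of j x] by auto

lemma Y_mult_self [simp]: "Y j x * Y j x = Y j x"
  using Y_01[of j x] by auto

lemma integrable_Y [simp]: "integrable M (Y j)"
  by (rule integrable_const_bound[where B = 1]) auto

lemma integrable_Y_mult_Y [simp]: "integrable M (\<lambda>x. Y i x * Y j x)"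
  by (rule integrable_const_bound[where B = 1]) (auto simp: abs_mult intro!: AE_I2 mult_le_one)

lemma sum_Y_le_card: "(\<Sum>i\<in>B. Y i x) \<le> card B"
  using sum_mono[of B "\<lambda>i. Y i x" "\<lambda>_. 1"] by simp

lemma expectation_Y_mult_Y:
  assumes "i \<in> {1..n}" "j \<in> {1..n}"
  shows "expectation (\<lambda>x. Y i x * Y j x) = (if i = j then \<delta> else \<delta>\<^sup>2)"
proof (cases "i = j")
  case True
  thus ?thesis using assms expectation_Y by simp
next
  case False
  have "expectation (\<lambda>x. \<Prod>m\<in>{i, j}. Y m x) = (\<Prod>m\<in>{i, j}. expectation (Y m))"
    using assms by (intro indep_vars_lebesgue_integral indep_vars_subset[OF indep_Y]) auto
  thus ?thesis using False assms expectation_Y by (simp add: power2_eq_square)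
qed

lemma expectation_sum_Y:
  "B \<subseteq> {1..n} \<Longrightarrow> expectation (\<lambda>x. \<Sum>i\<in>B. Y i x) = card B * \<delta>"
  by (subst Bochner_Integration.integral_sum) (auto simp: expectation_Y subset_iff)

lemma expectation_centered_sum_mult_Y:
  assumes B: "B \<subseteq> {1..n}" and "j \<in> B"
  shows "expectation (\<lambda>x. ((\<Sum>i\<in>B. Y i x) - card B * \<delta>) * Y j x) = \<delta> * (1 - \<delta>)"
proof -
  have fin: "finite B" using B finite_subset by blast
  have "expectation (\<lambda>x. ((\<Sum>i\<in>B. Y i x) - card B * \<delta>) * Y j x)
          = (\<Sum>i\<in>B. expectation (\<lambda>x. Y i x * Y j x)) - card B * \<delta> * \<delta>"
    using fin B \<open>j \<in> B\<close> expectation_Y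
    by (auto simp: left_diff_distrib sum_distrib_right Bochner_Integration.integral_sum subset_iff)
  also have "(\<Sum>i\<in>B. expectation (\<lambda>x. Y i x * Y j x)) = (\<Sum>i\<in>B. \<delta>\<^sup>2 + (if i = j then \<delta> - \<delta>\<^sup>2 else 0))"
    using B \<open>j \<in> B\<close> by (intro sum.cong) (auto simp: expectation_Y_mult_Y subset_iff)
  also have "\<dots> = card B * \<delta>\<^sup>2 + (\<delta> - \<delta>\<^sup>2)"
    using fin \<open>j \<in> B\<close> by (simp add: sum.distrib)
  finally show ?thesis by (simp add: power2_eq_square algebra_simps)
qed

lemma variance_sum_Y:
  assumes B: "B \<subseteq> {1..n}"
  shows "variance (\<lambda>x. \<Sum>i\<in>B. Y i x) = card B * \<delta> * (1 - \<delta>)"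
proof -
  define c where "c = card B * \<delta>"
  have fin: "finite B" using B finite_subset by blast
  have "((\<Sum>i\<in>B. Y i x) - c)\<^sup>2 = (\<Sum>j\<in>B. ((\<Sum>i\<in>B. Y i x) - c) * Y j x) - c * ((\<Sum>i\<in>B. Y i x) - c)" for x
    by (simp only: sum_distrib_left[symmetric]) (simp add: power2_eq_square algebra_simps)
  hence "variance (\<lambda>x. \<Sum>i\<in>B. Y i x)
           = (\<Sum>j\<in>B. expectation (\<lambda>x. ((\<Sum>i\<in>B. Y i x) - c) * Y j x))
             - c * (expectation (\<lambda>x. \<Sum>i\<in>B. Y i x) - c)"
    using fin by (simp add: expectation_sum_Y[OF B] c_def Bochner_Integration.integral_sum left_diff_distrib sum_distrib_right prob_space)
  also have "\<dots> = card B * \<delta> * (1 - \<delta>)"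
    unfolding expectation_sum_Y[OF B] using B by (simp add: expectation_centered_sum_mult_Y c_def)
  finally show ?thesis .
qed

lemma integrable_first_success [simp]: "integrable M (\<lambda>x. first_success (\<lambda>i. Y i x) j)"
  by (rule integrable_const_bound[where B = 1])
    (auto simp: first_success_def abs_mult abs_prod intro!: AE_I2 mult_le_one prod_le_1 prod_nonneg)

lemma expectation_first_success:
  assumes "j \<in> {1..n}"
  shows "expectation (\<lambda>x. first_success (\<lambda>i. Y i x) j) = \<delta> * (1 - \<delta>) ^ (j - 1)"
proof -
  define Z where "Z m x = (if m = j then Y m x else 1 - Y m x)" for m x
  have split: "{1..j} = insert j {1..<j}" using assms by auto
  have "indep_vars (\<lambda>_. borel) (\<lambda>m x. (\<lambda>v. if m = j then v else 1 - v) (Y m x)) {1..j}"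
    using assms by (intro indep_vars_compose2[OF indep_vars_subset[OF indep_Y]]) auto
  hence "indep_vars (\<lambda>_. borel) Z {1..j}"
    by (simp add: Z_def[abs_def])
  moreover have "integrable M (Z m)" for m
    by (cases "m = j") (simp_all add: Z_def[abs_def])
  ultimately have "expectation (\<lambda>x. \<Prod>m\<in>{1..j}. Z m x) = (\<Prod>m\<in>{1..j}. expectation (Z m))"
    by (intro indep_vars_lebesgue_integral) auto
  moreover have "(\<Prod>m\<in>{1..j}. Z m x) = first_success (\<lambda>i. Y i x) j" for x
    unfolding split first_success_def Z_def by (auto intro!: prod.cong)
  moreover have "(\<Prod>m\<in>{1..j}. expectation (Z m)) = \<delta> * (1 - \<delta>) ^ (j - 1)"
  proof -
    have "expectation (Z m) = 1 - \<delta>" if "m \<in> {1..<j}" for m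
      using that assms expectation_Y[of m] by (simp add: Z_def[abs_def] prob_space)
    moreover have "Z j = Y j" by (simp add: Z_def[abs_def])
    ultimately show ?thesis unfolding split using assms expectation_Y by simp
  qed
  ultimately show ?thesis by simp
qed

lemma indep_var_blocks:
  assumes "I \<subseteq> {1..n}" "J \<subseteq> {1..n}" "I \<inter> J = {}"
    and "f \<in> borel_measurable (PiM I (\<lambda>_. borel))" "g \<in> borel_measurable (PiM J (\<lambda>_. borel))"
  shows "indep_var borel (\<lambda>x. f (\<lambda>i\<in>I. Y i x)) borel (\<lambda>x. g (\<lambda>i\<in>J. Y i x))"
  using indep_var_compose[OF indep_var_restrict[OF indep_Y assms(3,1,2)] assms(4,5)]
  by (simp add: comp_def)

lemma integrable_sqrt_ln_sum_Y:
  "finite B \<Longrightarrow> integrable M (\<lambda>x. sqrt (ln (exp 1 + (\<Sum>i\<in>B. Y i x))))"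
proof (rule integrable_const_bound[where B = "sqrt (ln (exp 1 + card B))"])
  have "\<bar>sqrt (ln (exp 1 + (\<Sum>i\<in>B. Y i x)))\<bar> \<le> sqrt (ln (exp 1 + card B))" for x
    using one_le_sqrt_ln_exp_add[of "\<Sum>i\<in>B. Y i x"] sum_Y_le_card[where B = B and x = x]
      sqrt_ln_exp_add_mono[of "\<Sum>i\<in>B. Y i x" "card B"]
    by (simp add: sum_nonneg)
  thus "AE x in M. norm (sqrt (ln (exp 1 + (\<Sum>i\<in>B. Y i x)))) \<le> sqrt (ln (exp 1 + card B))"
    by simp
qed measurable

lemma integrable_sqrt_ln_Max:
  fixes a :: "nat \<Rightarrow> real"
  assumes "antimono_on {1..n} a" "\<And>j. j \<in> {1..n} \<Longrightarrow> 0 \<le> a j" "1 \<le> n"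
  shows "integrable M (\<lambda>x. sqrt (ln (exp 1 + (\<Sum>j=1..n. Y j x))) * Max ((\<lambda>j. Y j x * a j) ` {1..n}))"
proof (rule integrable_const_bound[where B = "sqrt (ln (exp 1 + n)) * a 1"])
  show "AE x in M. norm (sqrt (ln (exp 1 + (\<Sum>j=1..n. Y j x))) * Max ((\<lambda>j. Y j x * a j) ` {1..n}))
                     \<le> sqrt (ln (exp 1 + n)) * a 1"
  proof (intro AE_I2)
    fix x
    have "Max ((\<lambda>j. Y j x * a j) ` {1..n}) \<le> a 1"
      using Max_mult_le_sum_add[where \<omega> = "\<lambda>j. Y j x" and k = 0] assms by simp
    moreover have "sqrt (ln (exp 1 + (\<Sum>j=1..n. Y j x))) \<le> sqrt (ln (exp 1 + n))"
      using sum_Y_le_card[where B = "{1..n}" and x = x] by (intro sqrt_ln_exp_add_mono sum_nonneg) auto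
    moreover have "0 \<le> Max ((\<lambda>j. Y j x * a j) ` {1..n})"
      using assms by (intro Max_mult_nonneg) auto
    moreover have "0 \<le> sqrt (ln (exp 1 + (\<Sum>j=1..n. Y j x)))"
      using one_le_sqrt_ln_exp_add[of "\<Sum>j=1..n. Y j x"] by (simp add: sum_nonneg)
    ultimately show "norm (sqrt (ln (exp 1 + (\<Sum>j=1..n. Y j x))) * Max ((\<lambda>j. Y j x * a j) ` {1..n}))
                     \<le> sqrt (ln (exp 1 + n)) * a 1"
      by (simp add: abs_mult mult_mono)
  qed
qed measurable

lemma expectation_sqrt_ln_sum_Y_ge_second_moment:
  assumes B: "B \<subseteq> {1..n}" and \<mu>: "8 \<le> card B * \<delta>"
  shows "(1 - 4 / (card B * \<delta>)) * sqrt (ln (exp 1 + card B * \<delta> / 2))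
           \<le> expectation (\<lambda>\<omega>. sqrt (ln (exp 1 + (\<Sum>i\<in>B. Y i \<omega>))))"
proof -
  define S where "S \<omega> = (\<Sum>i\<in>B. Y i \<omega>)" for \<omega>
  define \<mu> where "\<mu> = card B * \<delta>"
  have "8 \<le> \<mu>" using \<mu> by (simp add: \<mu>_def)
  have S_nonneg: "0 \<le> S \<omega>" for \<omega> by (simp add: S_def sum_nonneg)
  have "0 < real (card B) * \<delta>" using \<mu> by simp
  hence "0 \<le> \<delta>" by (simp add: zero_less_mult_iff)
  have ES: "expectation S = \<mu>"
    unfolding S_def \<mu>_def by (rule expectation_sum_Y[OF B])
  have "variance S = \<mu> * (1 - \<delta>)"
    unfolding S_def \<mu>_def by (rule variance_sum_Y[OF B])
  also have "\<dots> \<le> \<mu>"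
    using \<open>0 \<le> \<delta>\<close> \<open>8 \<le> \<mu>\<close> by (simp add: mult_left_le)
  finally have var: "variance S \<le> \<mu>" .
  have sq: "integrable M (\<lambda>\<omega>. (S \<omega> - \<mu>)\<^sup>2)"
    unfolding S_def power2_eq_square
    by (simp add: left_diff_distrib right_diff_distrib sum_distrib_left sum_distrib_right)
  have int: "integrable M (\<lambda>\<omega>. sqrt (ln (exp 1 + S \<omega>)))"
    unfolding S_def using B finite_subset by (intro integrable_sqrt_ln_sum_Y) auto
  have "(1 - 4 / \<mu>) * sqrt (ln (exp 1 + \<mu> / 2)) \<le> expectation (\<lambda>\<omega>. sqrt (ln (exp 1 + S \<omega>)))"
  proof (rule second_moment_lower_bound[of S "\<lambda>s. sqrt (ln (exp 1 + s))", unfolded ES])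
    show "integrable M S" by (simp add: S_def[abs_def])
    show "0 \<le> sqrt (ln (exp 1 + \<mu> / 2))"
      using \<open>8 \<le> \<mu>\<close> by (intro order.trans[OF zero_le_one one_le_sqrt_ln_exp_add]) simp
    show "0 \<le> sqrt (ln (exp 1 + S \<omega>))" for \<omega>
      using S_nonneg by (intro order.trans[OF zero_le_one one_le_sqrt_ln_exp_add])
    show "sqrt (ln (exp 1 + \<mu> / 2)) \<le> sqrt (ln (exp 1 + S \<omega>))" if "\<mu> / 2 \<le> S \<omega>" for \<omega>
      using that \<open>8 \<le> \<mu>\<close> by (intro sqrt_ln_exp_add_mono) auto
  qed (use sq var[unfolded ES] int \<open>8 \<le> \<mu>\<close> in auto)
  thus ?thesis by (simp add: S_def \<mu>_def)
qed

lemma expectation_sqrt_ln_sum_Y_ge: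
  assumes B: "B \<subseteq> {1..n}" and x: "0 < x" "x \<le> 2 * (card B * \<delta>)"
  shows "sqrt (ln x) / 4 \<le> expectation (\<lambda>\<omega>. sqrt (ln (exp 1 + (\<Sum>i\<in>B. Y i \<omega>))))"
proof (cases "ln x \<le> 16")
  case True
  have "sqrt (ln x) \<le> sqrt 16" using True by (rule real_sqrt_le_mono)
  also have "sqrt 16 = (4 :: real)" by (rule real_sqrt_unique) simp_all
  moreover have "1 \<le> expectation (\<lambda>\<omega>. sqrt (ln (exp 1 + (\<Sum>i\<in>B. Y i \<omega>))))"
    using B finite_subset
    by (intro integral_ge_const AE_I2 one_le_sqrt_ln_exp_add integrable_sqrt_ln_sum_Y sum_nonneg) auto
  ultimately show ?thesis by simp
next
  case False
  define \<mu> where "\<mu> = card B * \<delta>"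
  have "17 \<le> exp (16 :: real)" using exp_ge_add_one_self[of 16] by simp
  also have "\<dots> < x" using False x by (metis exp_ln exp_less_mono not_le)
  finally have "8 \<le> \<mu>" using x by (simp add: \<mu>_def)
  have "ln x / 4 \<le> ln (x / 4)"
    using ln_le_minus_one[of 4] False x by (simp add: ln_div)
  also have "\<dots> \<le> ln (exp 1 + \<mu> / 2)"
    using x exp_ge_zero[of 1] unfolding \<mu>_def by (intro ln_mono) linarith+
  finally have "sqrt (ln x / 4) \<le> sqrt (ln (exp 1 + \<mu> / 2))"
    by (rule real_sqrt_le_mono)
  moreover have "sqrt (ln x / 4) = sqrt (ln x) / 2"
    by (simp add: real_sqrt_divide real_sqrt_unique[of 2 4])
  ultimately have "sqrt (ln x) / 4 \<le> 1 / 2 * sqrt (ln (exp 1 + \<mu> / 2))" by simp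
  also have "\<dots> \<le> (1 - 4 / \<mu>) * sqrt (ln (exp 1 + \<mu> / 2))"
    using \<open>8 \<le> \<mu>\<close> one_le_sqrt_ln_exp_add[of "\<mu> / 2"]
    by (intro mult_right_mono) (simp_all add: field_simps)
  also have "\<dots> \<le> expectation (\<lambda>\<omega>. sqrt (ln (exp 1 + (\<Sum>i\<in>B. Y i \<omega>))))"
    using expectation_sqrt_ln_sum_Y_ge_second_moment[OF B] \<open>8 \<le> \<mu>\<close> by (simp add: \<mu>_def)
  finally show ?thesis .
qed

lemma expectation_sum_first_success_ge:
  fixes a :: "nat \<Rightarrow> real"
  assumes "\<And>j. j \<in> {1..k} \<Longrightarrow> 0 \<le> a j" "\<delta> * real k = 1" "k \<le> n"
  shows "\<delta> * exp (-1) * (\<Sum>j=1..k. a j) \<le> expectation (\<lambda>x. \<Sum>j=1..k. a j * first_success (\<lambda>i. Y i x) j)"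
proof -
  have "1 \<le> k" using assms(2) by (cases k) auto
  have \<delta>: "\<delta> = 1 / real k" using assms(2) \<open>1 \<le> k\<close> by (simp add: field_simps)
  have "\<delta> * exp (-1) * (\<Sum>j=1..k. a j) = (\<Sum>j=1..k. a j * (\<delta> * exp (-1)))"
    by (simp add: sum_distrib_left mult_ac)
  also have "\<dots> \<le> (\<Sum>j=1..k. a j * (\<delta> * (1 - \<delta>) ^ (j - 1)))"
  proof (intro sum_mono mult_left_mono)
    fix j assume j: "j \<in> {1..k}"
    have "exp (-1) \<le> (1 - \<delta>) ^ (k - 1)"
      unfolding \<delta> using \<open>1 \<le> k\<close> by (rule exp_minus_one_le_power)
    also have "\<dots> \<le> (1 - \<delta>) ^ (j - 1)"
      using j \<open>1 \<le> k\<close> by (intro power_decreasing) (auto simp: \<delta>)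
    finally show "exp (-1) \<le> (1 - \<delta>) ^ (j - 1)" .
  qed (use assms(1) in \<open>auto simp: \<delta>\<close>)
  also have "\<dots> = (\<Sum>j=1..k. a j * expectation (\<lambda>x. first_success (\<lambda>i. Y i x) j))"
    using assms(3) by (intro sum.cong) (auto simp: expectation_first_success)
  also have "\<dots> = expectation (\<lambda>x. \<Sum>j=1..k. a j * first_success (\<lambda>i. Y i x) j)"
    by (simp add: Bochner_Integration.integral_sum)
  finally show ?thesis .
qed

lemma expectation_centered_sum_mult_prefix:
  fixes a :: "nat \<Rightarrow> real"
  assumes "k \<le> n"
  shows "expectation (\<lambda>x. ((\<Sum>j=1..n. Y j x) - \<delta> * n) * ((\<Sum>j=1..k. Y j x * a j) + c))
           = \<delta> * (1 - \<delta>) * (\<Sum>j=1..k. a j)"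
proof -
  have "((\<Sum>i=1..n. Y i x) - \<delta> * n) * ((\<Sum>j=1..k. Y j x * a j) + c)
          = (\<Sum>j=1..k. a j * (((\<Sum>i\<in>{1..n}. Y i x) - card {1..n} * \<delta>) * Y j x))
            + c * ((\<Sum>i=1..n. Y i x) - \<delta> * n)" for x
    unfolding distrib_left sum_distrib_left by (simp add: mult_ac)
  hence "expectation (\<lambda>x. ((\<Sum>j=1..n. Y j x) - \<delta> * n) * ((\<Sum>j=1..k. Y j x * a j) + c))
          = (\<Sum>j=1..k. a j * expectation (\<lambda>x. ((\<Sum>i\<in>{1..n}. Y i x) - card {1..n} * \<delta>) * Y j x))
            + c * (expectation (\<lambda>x. \<Sum>i=1..n. Y i x) - \<delta> * n)"
    by (simp add: Bochner_Integration.integral_sum prob_space left_diff_distrib sum_distrib_right)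
  also have "\<dots> = (\<Sum>j=1..k. a j * (\<delta> * (1 - \<delta>))) + c * 0"
    using assms expectation_sum_Y[of "{1..n}"]
    by (intro arg_cong2[where f = "(+)"] sum.cong)
      (auto simp: expectation_centered_sum_mult_Y[of "{1..n}", simplified])
  finally show ?thesis by (simp add: sum_distrib_left mult_ac)
qed

lemma expectation_affine_sum_mult_prefix:
  fixes a :: "nat \<Rightarrow> real" and g \<beta> c :: real
  assumes "k \<le> n"
  defines "F \<equiv> \<lambda>x. (g + \<beta> * ((\<Sum>j=1..n. Y j x) - \<delta> * n)) * ((\<Sum>j=1..k. Y j x * a j) + c)"
  shows "integrable M F"
    and "expectation F = g * (\<delta> * (\<Sum>j=1..k. a j) + c) + \<beta> * (\<delta> * (1 - \<delta>) * (\<Sum>j=1..k. a j))"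
proof -
  define S where "S x = (\<Sum>j=1..n. Y j x) - \<delta> * n" for x
  define N where "N x = (\<Sum>j=1..k. Y j x * a j) + c" for x
  have F: "F = (\<lambda>x. g * N x + \<beta> * (S x * N x))"
    by (simp add: F_def S_def N_def fun_eq_iff distrib_right mult.assoc)
  have "integrable M N" by (simp add: N_def[abs_def])
  moreover have "integrable M (\<lambda>x. S x * N x)"
    by (simp add: S_def N_def left_diff_distrib distrib_left sum_distrib_left sum_distrib_right
        flip: mult.assoc)
  ultimately show "integrable M F" unfolding F by simp
  have "expectation N = \<delta> * (\<Sum>j=1..k. a j) + c"
    using \<open>k \<le> n\<close> unfolding N_def
    by (simp add: Bochner_Integration.integral_sum prob_space sum_distrib_left expectation_Y)
  moreover have "expectation (\<lambda>x. S x * N x) = \<delta> * (1 - \<delta>) * (\<Sum>j=1..k. a j)"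
    unfolding S_def N_def using \<open>k \<le> n\<close> by (rule expectation_centered_sum_mult_prefix)
  ultimately show "expectation F = g * (\<delta> * (\<Sum>j=1..k. a j) + c) + \<beta> * (\<delta> * (1 - \<delta>) * (\<Sum>j=1..k. a j))"
    unfolding F using \<open>integrable M N\<close> \<open>integrable M (\<lambda>x. S x * N x)\<close> by simp
qed

lemma expectation_sqrt_ln_Max_le:
  fixes a :: "nat \<Rightarrow> real"
  assumes a: "antimono_on {1..n} a" "\<And>j. j \<in> {1..n} \<Longrightarrow> 0 \<le> a j"
    and \<delta>k: "\<delta> * real k = 1" and \<delta>n: "2 < \<delta> * real n"
  shows "expectation (\<lambda>x. sqrt (ln (exp 1 + (\<Sum>j=1..n. Y j x))) * Max ((\<lambda>j. Y j x * a j) ` {1..n}))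
           \<le> 4 * \<delta> * sqrt (ln (\<delta> * real n)) * (\<Sum>j=1..k. a j)"
proof -
  obtain "0 < \<delta>" "1 \<le> k" "2 * k < n" using reciprocal_bounds[OF \<delta>k \<delta>n] by blast
  define x\<^sub>0 where "x\<^sub>0 = \<delta> * real n"
  define g where "g = sqrt (ln (exp 1 + x\<^sub>0))"
  define \<beta> where "\<beta> = 1 / (2 * g * (exp 1 + x\<^sub>0))"
  define A where "A = (\<Sum>j=1..k. a j)"
  define S where "S x = (\<Sum>j=1..n. Y j x)" for x
  define N where "N x = (\<Sum>j=1..k. Y j x * a j) + a (k + 1)" for x
  have "2 < x\<^sub>0" using \<delta>n by (simp add: x\<^sub>0_def)
  have "1 \<le> g" unfolding g_def using \<open>2 < x\<^sub>0\<close> by (intro one_le_sqrt_ln_exp_add) simp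
  have "0 \<le> \<beta>" using \<open>1 \<le> g\<close> \<open>2 < x\<^sub>0\<close> exp_ge_zero[of 1] by (simp add: \<beta>_def)
  have "0 \<le> A" unfolding A_def using a(2) \<open>2 * k < n\<close> by (intro sum_nonneg) auto
  have "\<delta> * (real k * a (k + 1)) \<le> \<delta> * A"
    unfolding A_def using antimono_on_mult_le_sum[OF a(1)] \<open>2 * k < n\<close> \<open>0 < \<delta>\<close> by simp
  hence tail: "a (k + 1) \<le> \<delta> * A" using \<delta>k by (simp add: mult.assoc[symmetric])
  have "expectation (\<lambda>x. sqrt (ln (exp 1 + S x)) * Max ((\<lambda>j. Y j x * a j) ` {1..n}))
          \<le> expectation (\<lambda>x. (g + \<beta> * (S x - x\<^sub>0)) * N x)"
  proof (rule integral_mono)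
    show "integrable M (\<lambda>x. (g + \<beta> * (S x - x\<^sub>0)) * N x)"
      unfolding S_def N_def x\<^sub>0_def using \<open>2 * k < n\<close> by (intro expectation_affine_sum_mult_prefix(1)) simp
    show "sqrt (ln (exp 1 + S x)) * Max ((\<lambda>j. Y j x * a j) ` {1..n}) \<le> (g + \<beta> * (S x - x\<^sub>0)) * N x" for x
      using sqrt_ln_sum_mult_Max_le[OF _ a, of "\<lambda>j. Y j x" k x\<^sub>0] \<open>2 * k < n\<close> \<open>2 < x\<^sub>0\<close>
      by (simp add: S_def N_def g_def \<beta>_def)
  qed (use integrable_sqrt_ln_Max[OF a] \<open>2 * k < n\<close> in \<open>simp add: S_def\<close>)
  also have "\<dots> = g * (\<delta> * A + a (k + 1)) + \<beta> * (\<delta> * (1 - \<delta>) * A)"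
    unfolding S_def N_def x\<^sub>0_def A_def using \<open>2 * k < n\<close> by (intro expectation_affine_sum_mult_prefix(2)) simp
  also have "\<dots> \<le> g * (2 * (\<delta> * A)) + \<beta> * (\<delta> * A)"
    using tail \<open>1 \<le> g\<close> \<open>0 \<le> \<beta>\<close> \<open>0 < \<delta>\<close> \<open>0 \<le> A\<close> mult_nonneg_nonneg[of \<delta> A]
    by (intro add_mono mult_left_mono) (auto simp: algebra_simps)
  also have "\<dots> = \<delta> * A * (2 * g + \<beta>)"
    by (simp add: algebra_simps)
  also have "\<dots> \<le> \<delta> * A * (4 * sqrt (ln x\<^sub>0))"
    using twice_sqrt_ln_exp_add_plus_slope_le[OF \<open>2 < x\<^sub>0\<close>] \<open>0 < \<delta>\<close> \<open>0 \<le> A\<close>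
    by (intro mult_left_mono) (simp_all add: g_def \<beta>_def)
  finally show ?thesis by (simp add: S_def A_def x\<^sub>0_def mult_ac)
qed

lemma indep_var_first_success_tail:
  fixes a :: "nat \<Rightarrow> real"
  assumes "k \<le> n"
  shows "indep_var borel (\<lambda>x. \<Sum>j=1..k. a j * first_success (\<lambda>i. Y i x) j)
                   borel (\<lambda>x. sqrt (ln (exp 1 + (\<Sum>i\<in>{k+1..n}. Y i x))))"
proof -
  define f where "f \<omega> = (\<Sum>j=1..k. a j * first_success \<omega> j)" for \<omega>
  define g where "g \<omega> = sqrt (ln (exp 1 + (\<Sum>i\<in>{k+1..n}. \<omega> i)))" for \<omega> :: "nat \<Rightarrow> real"
  have "indep_var borel (\<lambda>x. f (\<lambda>i\<in>{1..k}. Y i x)) borel (\<lambda>x. g (\<lambda>i\<in>{k+1..n}. Y i x))"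
  proof (rule indep_var_blocks)
    show "f \<in> borel_measurable (PiM {1..k} (\<lambda>_. borel))"
      unfolding f_def[abs_def] first_success_def
      by (intro borel_measurable_sum borel_measurable_times borel_measurable_prod
          borel_measurable_diff borel_measurable_const measurable_component_singleton) auto
    have "(\<lambda>\<omega>. \<Sum>i\<in>{k+1..n}. \<omega> i) \<in> borel_measurable (PiM {k+1..n} (\<lambda>_. borel :: real measure))"
      by (intro borel_measurable_sum measurable_component_singleton) auto
    thus "g \<in> borel_measurable (PiM {k+1..n} (\<lambda>_. borel))"
      unfolding g_def[abs_def] by measurable
  qed (use assms in auto)
  moreover have "f (\<lambda>i\<in>{1..k}. Y i x) = (\<Sum>j=1..k. a j * first_success (\<lambda>i. Y i x) j)"
    "g (\<lambda>i\<in>{k+1..n}. Y i x) = sqrt (ln (exp 1 + (\<Sum>i\<in>{k+1..n}. Y i x)))" for x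
    by (auto simp: f_def g_def first_success_restrict intro!: sum.cong)
  ultimately show ?thesis by simp
qed

lemma expectation_first_success_mult_tail_le:
  fixes a :: "nat \<Rightarrow> real"
  assumes a: "antimono_on {1..n} a" "\<And>j. j \<in> {1..n} \<Longrightarrow> 0 \<le> a j" and "k \<le> n" "1 \<le> n"
  shows "expectation (\<lambda>x. \<Sum>j=1..k. a j * first_success (\<lambda>i. Y i x) j)
           * expectation (\<lambda>x. sqrt (ln (exp 1 + (\<Sum>i\<in>{k+1..n}. Y i x))))
         \<le> expectation (\<lambda>x. sqrt (ln (exp 1 + (\<Sum>j=1..n. Y j x))) * Max ((\<lambda>j. Y j x * a j) ` {1..n}))"
proof -
  define T where "T x = sqrt (ln (exp 1 + (\<Sum>j=1..n. Y j x))) * Max ((\<lambda>j. Y j x * a j) ` {1..n})" for x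
  define W where "W x = (\<Sum>j=1..k. a j * first_success (\<lambda>i. Y i x) j)" for x
  define G where "G x = sqrt (ln (exp 1 + (\<Sum>i\<in>{k+1..n}. Y i x)))" for x
  have W_nonneg: "0 \<le> W x" for x
    using a(2) \<open>k \<le> n\<close> by (auto simp: W_def first_success_nonneg intro!: sum_nonneg)
  have tail_nonneg: "0 \<le> (\<Sum>i\<in>{k+1..n}. Y i x)" for x
    by (simp add: sum_nonneg)
  have G_nonneg: "0 \<le> G x" for x
    unfolding G_def using one_le_sqrt_ln_exp_add[OF tail_nonneg[of x]] by linarith
  have WG_le: "W x * G x \<le> T x" for x
  proof -
    have "G x \<le> sqrt (ln (exp 1 + (\<Sum>j=1..n. Y j x)))"
      unfolding G_def by (intro sqrt_ln_exp_add_mono[OF tail_nonneg] sum_mono2) auto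
    moreover have "W x \<le> Max ((\<lambda>j. Y j x * a j) ` {1..n})"
      unfolding W_def using Y_01 a(2) assms(3,4) by (intro sum_first_success_le_Max) auto
    ultimately have "W x * G x \<le> Max ((\<lambda>j. Y j x * a j) ` {1..n}) * sqrt (ln (exp 1 + (\<Sum>j=1..n. Y j x)))"
      using W_nonneg[of x] G_nonneg by (intro mult_mono) auto
    thus ?thesis by (simp add: T_def mult.commute)
  qed
  have "indep_var borel W borel G"
    unfolding W_def[abs_def] G_def[abs_def] using \<open>k \<le> n\<close> by (intro indep_var_first_success_tail)
  moreover have "integrable M W" "integrable M G"
    by (simp_all add: W_def[abs_def] G_def[abs_def] integrable_sqrt_ln_sum_Y)
  ultimately have "expectation W * expectation G = expectation (\<lambda>x. W x * G x)"
    by (simp add: indep_var_lebesgue_integral)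
  also have "\<dots> \<le> expectation T"
    using integrable_sqrt_ln_Max[OF a \<open>1 \<le> n\<close>] WG_le W_nonneg G_nonneg
    by (intro integral_mono') (auto simp: T_def[abs_def] intro: order.trans[OF mult_nonneg_nonneg])
  finally show ?thesis by (simp add: W_def[abs_def] G_def[abs_def] T_def[abs_def])
qed

lemma expectation_sqrt_ln_Max_ge:
  fixes a :: "nat \<Rightarrow> real"
  assumes a: "antimono_on {1..n} a" "\<And>j. j \<in> {1..n} \<Longrightarrow> 0 \<le> a j"
    and \<delta>k: "\<delta> * real k = 1" and \<delta>n: "2 < \<delta> * real n"
  shows "\<delta> / (4 * exp 1) * sqrt (ln (\<delta> * real n)) * (\<Sum>j=1..k. a j)
           \<le> expectation (\<lambda>x. sqrt (ln (exp 1 + (\<Sum>j=1..n. Y j x))) * Max ((\<lambda>j. Y j x * a j) ` {1..n}))"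
proof -
  obtain "0 < \<delta>" "1 \<le> k" "2 * k < n" using reciprocal_bounds[OF \<delta>k \<delta>n] by blast
  have EW: "\<delta> * exp (-1) * (\<Sum>j=1..k. a j) \<le> expectation (\<lambda>x. \<Sum>j=1..k. a j * first_success (\<lambda>i. Y i x) j)"
    using a(2) \<delta>k \<open>2 * k < n\<close> by (intro expectation_sum_first_success_ge) auto
  have EG: "sqrt (ln (\<delta> * real n)) / 4 \<le> expectation (\<lambda>x. sqrt (ln (exp 1 + (\<Sum>i\<in>{k+1..n}. Y i x))))"
    using \<open>2 * k < n\<close> \<open>0 < \<delta>\<close>
    by (intro expectation_sqrt_ln_sum_Y_ge) (auto simp: of_nat_diff algebra_simps)
  have "0 \<le> \<delta> * exp (-1) * (\<Sum>j=1..k. a j)"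
    using \<open>0 < \<delta>\<close> a(2) \<open>2 * k < n\<close> by (intro mult_nonneg_nonneg sum_nonneg) auto
  hence "\<delta> * exp (-1) * (\<Sum>j=1..k. a j) * (sqrt (ln (\<delta> * real n)) / 4)
      \<le> expectation (\<lambda>x. \<Sum>j=1..k. a j * first_success (\<lambda>i. Y i x) j)
          * expectation (\<lambda>x. sqrt (ln (exp 1 + (\<Sum>i\<in>{k+1..n}. Y i x))))"
    using EW EG \<delta>n by (intro mult_mono) auto
  also have "\<dots> \<le> expectation (\<lambda>x. sqrt (ln (exp 1 + (\<Sum>j=1..n. Y j x))) * Max ((\<lambda>j. Y j x * a j) ` {1..n}))"
    using \<open>2 * k < n\<close> by (intro expectation_first_success_mult_tail_le[OF a]) auto
  finally show ?thesis by (simp add: exp_minus field_simps)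
qed

end

lemma (in prob_space) bernoulli_family_indicators:
  fixes X :: "nat \<Rightarrow> 'a \<Rightarrow> real"
  assumes X: "\<And>j. j \<in> {1..n} \<Longrightarrow> X j \<in> borel_measurable M" "indep_vars (\<lambda>_. borel) X {1..n}"
    and prob_1: "\<And>j. j \<in> {1..n} \<Longrightarrow> prob {x \<in> space M. X j x = 1} = \<delta>"
  shows "bernoulli_family M (\<lambda>j x. if j \<in> {1..n} \<and> X j x = 1 then 1 else 0) n \<delta>"
proof
  fix j
  show "(\<lambda>x. if j \<in> {1..n} \<and> X j x = 1 then 1 else 0 :: real) \<in> borel_measurable M"
    using X(1)[of j] by (cases "j \<in> {1..n}") simp_all
  assume j: "j \<in> {1..n}"
  have [measurable]: "X j \<in> borel_measurable M" using X(1)[OF j] .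
  have "expectation (\<lambda>x. if j \<in> {1..n} \<and> X j x = 1 then 1 else 0)
          = expectation (indicator {x \<in> space M. X j x = 1} :: 'a \<Rightarrow> real)"
    using j by (intro Bochner_Integration.integral_cong) (auto simp: indicator_def)
  thus "expectation (\<lambda>x. if j \<in> {1..n} \<and> X j x = 1 then 1 else 0) = \<delta>"
    using prob_1[OF j] by simp
next
  have "indep_vars (\<lambda>_. borel) (\<lambda>j x. (\<lambda>v. if v = 1 then 1 else 0 :: real) (X j x)) {1..n}"
    using X(2) by (rule indep_vars_compose2) auto
  thus "indep_vars (\<lambda>_. borel) (\<lambda>j x. if j \<in> {1..n} \<and> X j x = 1 then 1 else 0 :: real) {1..n}"
    by (rule indep_vars_cong[THEN iffD1, rotated -1]) auto
qed auto

lemma (in prob_space) AE_eq_indicator: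
  fixes X :: "'a \<Rightarrow> real"
  assumes [measurable]: "X \<in> borel_measurable M"
    and "prob {x \<in> space M. X x = 1} + prob {x \<in> space M. X x = 0} = 1"
  shows "AE x in M. X x = (if X x = 1 then 1 else 0)"
proof -
  have "prob ({x \<in> space M. X x = 1} \<union> {x \<in> space M. X x = 0}) = 1"
    using assms(2) by (subst finite_measure_Union) auto
  hence "AE x in M. x \<in> {x \<in> space M. X x = 1} \<union> {x \<in> space M. X x = 0}"
    by (intro AE_prob_1) simp
  thus ?thesis by eventually_elim auto
qed

lemma (in prob_space) expectation_sqrt_ln_Max_cong_AE:
  fixes X Z :: "nat \<Rightarrow> 'a \<Rightarrow> real" and a :: "nat \<Rightarrow> real"
  assumes "\<And>j. j \<in> {1..n} \<Longrightarrow> X j \<in> borel_measurable M" "\<And>j. j \<in> {1..n} \<Longrightarrow> Z j \<in> borel_measurable M"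
    and "\<And>j. j \<in> {1..n} \<Longrightarrow> AE x in M. X j x = Z j x"
  shows "expectation (\<lambda>x. sqrt (ln (exp 1 + (\<Sum>j=1..n. X j x))) * Max ((\<lambda>j. X j x * a j) ` {1..n}))
           = expectation (\<lambda>x. sqrt (ln (exp 1 + (\<Sum>j=1..n. Z j x))) * Max ((\<lambda>j. Z j x * a j) ` {1..n}))"
proof (rule integral_cong_AE)
  have "(\<lambda>x. sqrt (ln (exp 1 + (\<Sum>j=1..n. V j x))) * Max ((\<lambda>j. V j x * a j) ` {1..n})) \<in> borel_measurable M"
    if "\<And>j. j \<in> {1..n} \<Longrightarrow> V j \<in> borel_measurable M" for V :: "nat \<Rightarrow> 'a \<Rightarrow> real"
  proof -
    have "(\<lambda>x. \<Sum>j=1..n. V j x) \<in> borel_measurable M"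
      using that by (intro borel_measurable_sum) auto
    moreover have "(\<lambda>x. Max ((\<lambda>j. V j x * a j) ` {1..n})) \<in> borel_measurable M"
      using that by (intro borel_measurable_Max) auto
    ultimately show ?thesis by measurable
  qed
  thus "(\<lambda>x. sqrt (ln (exp 1 + (\<Sum>j=1..n. X j x))) * Max ((\<lambda>j. X j x * a j) ` {1..n})) \<in> borel_measurable M"
    "(\<lambda>x. sqrt (ln (exp 1 + (\<Sum>j=1..n. Z j x))) * Max ((\<lambda>j. Z j x * a j) ` {1..n})) \<in> borel_measurable M"
    using assms(1,2) by blast+
  have "AE x in M. \<forall>j\<in>{1..n}. X j x = Z j x"
    using assms(3) by (intro AE_finite_allI) auto
  thus "AE x in M. sqrt (ln (exp 1 + (\<Sum>j=1..n. X j x))) * Max ((\<lambda>j. X j x * a j) ` {1..n})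
                 = sqrt (ln (exp 1 + (\<Sum>j=1..n. Z j x))) * Max ((\<lambda>j. Z j x * a j) ` {1..n})"
  proof eventually_elim
    case (elim x)
    hence "(\<Sum>j=1..n. X j x) = (\<Sum>j=1..n. Z j x)"
      "(\<lambda>j. X j x * a j) ` {1..n} = (\<lambda>j. Z j x * a j) ` {1..n}"
      by (auto intro!: sum.cong image_cong)
    thus ?case by simp
  qed
qed

theorem lemma5p1:
  fixes M :: "'s measure" and X :: "nat \<Rightarrow> 's \<Rightarrow> real"
    and a :: "nat \<Rightarrow> real" and n k :: nat and \<delta> :: real
  assumes "prob_space M"
    and "n \<ge> 1"
    and "\<And>j. 1 \<le> j \<Longrightarrow> j < n \<Longrightarrow> a j \<ge> a (Suc j)"
    and "a n \<ge> 0"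
    and "2 / real n < \<delta>" and "\<delta> \<le> 1"
    and "1 / \<delta> = real k"
    and "\<And>j. j \<in> {1..n} \<Longrightarrow> X j \<in> borel_measurable M"
    and "prob_space.indep_vars M (\<lambda>_. borel) X {1..n}"
    and "\<And>j. j \<in> {1..n} \<Longrightarrow> measure M {x \<in> space M. X j x = 1} = \<delta>"
    and "\<And>j. j \<in> {1..n} \<Longrightarrow> measure M {x \<in> space M. X j x = 0} = 1 - \<delta>"
  shows "\<delta> / (4 * exp 1) * sqrt (ln (\<delta> * real n)) * (\<Sum>j=1..k. a j)
           \<le> prob_space.expectation M
               (\<lambda>x. sqrt (ln (exp 1 + (\<Sum>j=1..n. X j x))) * Max ((\<lambda>j. X j x * a j) ` {1..n}))
    \<and> prob_space.expectation M
               (\<lambda>x. sqrt (ln (exp 1 + (\<Sum>j=1..n. X j x))) * Max ((\<lambda>j. X j x * a j) ` {1..n}))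
           \<le> 4 * \<delta> * sqrt (ln (\<delta> * real n)) * (\<Sum>j=1..k. a j)"
proof -
  interpret prob_space M by fact
  \<comment> \<open>The \<open>X j\<close> are 0/1-valued only almost surely; \<open>\<delta> \<le> 1\<close> is implied by \<open>1 / \<delta> = k\<close>.\<close>
  define Y where "Y j x = (if j \<in> {1..n} \<and> X j x = 1 then 1 else 0 :: real)" for j x
  interpret Y: bernoulli_family M Y n \<delta>
    unfolding Y_def[abs_def] using assms(8-10) by (rule bernoulli_family_indicators)
  have \<delta>n: "2 < \<delta> * real n" using assms(2,5) by (simp add: field_simps)
  hence "\<delta> \<noteq> 0" by auto
  hence \<delta>k: "\<delta> * real k = 1" using assms(7) by (simp add: field_simps)
  have a_antimono: "antimono_on {1..n} a"
    using assms(3) by (rule antimono_on_atLeastAtMost_Suc)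
  have a_nonneg: "0 \<le> a j" if "j \<in> {1..n}" for j
    using monotone_onD[OF a_antimono, of j n] assms(2,4) that by auto
  have "AE x in M. X j x = Y j x" if "j \<in> {1..n}" for j
    using AE_eq_indicator[of "X j"] assms(8,10,11) that by (simp add: Y_def)
  hence "expectation (\<lambda>x. sqrt (ln (exp 1 + (\<Sum>j=1..n. X j x))) * Max ((\<lambda>j. X j x * a j) ` {1..n}))
           = expectation (\<lambda>x. sqrt (ln (exp 1 + (\<Sum>j=1..n. Y j x))) * Max ((\<lambda>j. Y j x * a j) ` {1..n}))"
    using assms(8) by (intro expectation_sqrt_ln_Max_cong_AE) auto
  thus ?thesis
    using Y.expectation_sqrt_ln_Max_ge[OF a_antimono a_nonneg \<delta>k \<delta>n]
      Y.expectation_sqrt_ln_Max_le[OF a_antimono a_nonneg \<delta>k \<delta>n] by simp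
qed

end
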